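(* In the setting described in the context, for every metric $d$ on $A$ with $d\in\mathcal{B}_2$ and every $x\in A$, $$d(x,\cdot)\ge\frac{d(\cdot,\cdot)}{2}.$$
   Context: $A$ is a nonempty set (possibly infinite). A metric on $A$ is a function $d:A^2\to\mathbb{R}$ such that for all $x,y,z\in A$: $d(x,y)=0$ iff $x=y$, and $d(x,y)+d(x,z)-d(y,z)\ge0$. $\mathcal{B}_1$ is a set of functions $A\to\mathbb{R}$ forming a real linear space containing all constant functions, and $\mu:\mathcal{B}_1\to\mathbb{R}$ is a linear functional with $\mu(c)=c$ for every constant function $c$ and monotone: if $f,g\in\mathcal{B}_1$ and $f\ge g$ pointwise, then $\mu(f)\ge\mu(g)$. For $f:A^2\to\mathbb{R}$ such that $y\mapsto f(x,y)$ lies in $\mathcal{B}_1$ for every $x$, write $f(x,\cdot)=\mu(y\mapsto f(x,y))$. $\mathcal{B}_2$ is a set of functions $A^2\to\mathbb{R}$ forming a real linear space that contains all constant functions and all functions $(x,y)\mapsto h(x)$ and $(x,y)\mapsto h(y)$ with $h\in\mathcal{B}_1$, and such that for every $f\in\mathcal{B}_2$: $y\mapsto f(x,y)\in\mathcal{B}_1$ for every $x$, $x\mapsto f(x,\cdot)\in\mathcal{B}_1$, and $x\mapsto f(x,x)\in\mathcal{B}_1$. For a symmetric $d\in\mathcal{B}_2$, $d(\cdot,\cdot)=\mu(x\mapsto d(x,\cdot))$ (a real number). *)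

theory Defs
  imports Complex_Main
begin

text \<open>The set A is modelled as the (nonempty) type 'a. Functions on A^2 are curried.\<close>

definition metric_on :: "('a \<Rightarrow> 'a \<Rightarrow> real) \<Rightarrow> bool" where
  "metric_on d \<longleftrightarrow> (\<forall>x y. d x y = 0 \<longleftrightarrow> x = y) \<and>
     (\<forall>x y z. d x y + d x z - d y z \<ge> 0)"

definition B1_space :: "('a \<Rightarrow> real) set \<Rightarrow> bool" where
  "B1_space B1 \<longleftrightarrow> (\<forall>c. (\<lambda>_. c) \<in> B1) \<and>
     (\<forall>f\<in>B1. \<forall>g\<in>B1. (\<lambda>x. f x + g x) \<in> B1) \<and>
     (\<forall>a. \<forall>f\<in>B1. (\<lambda>x. a * f x) \<in> B1)"

definition mean_functional :: "('a \<Rightarrow> real) set \<Rightarrow> (('a \<Rightarrow> real) \<Rightarrow> real) \<Rightarrow> bool" where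
  "mean_functional B1 \<mu> \<longleftrightarrow>
     (\<forall>f\<in>B1. \<forall>g\<in>B1. \<mu> (\<lambda>x. f x + g x) = \<mu> f + \<mu> g) \<and>
     (\<forall>a. \<forall>f\<in>B1. \<mu> (\<lambda>x. a * f x) = a * \<mu> f) \<and>
     (\<forall>c. \<mu> (\<lambda>_. c) = c) \<and>
     (\<forall>f\<in>B1. \<forall>g\<in>B1. (\<forall>x. f x \<ge> g x) \<longrightarrow> \<mu> f \<ge> \<mu> g)"

definition B2_space :: "('a \<Rightarrow> real) set \<Rightarrow> (('a \<Rightarrow> real) \<Rightarrow> real)
    \<Rightarrow> ('a \<Rightarrow> 'a \<Rightarrow> real) set \<Rightarrow> bool" where
  "B2_space B1 \<mu> B2 \<longleftrightarrow>
     (\<forall>f\<in>B2. \<forall>g\<in>B2. (\<lambda>x y. f x y + g x y) \<in> B2) \<and>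
     (\<forall>a. \<forall>f\<in>B2. (\<lambda>x y. a * f x y) \<in> B2) \<and>
     (\<forall>c. (\<lambda>_ _. c) \<in> B2) \<and>
     (\<forall>h\<in>B1. (\<lambda>x y. h x) \<in> B2 \<and> (\<lambda>x y. h y) \<in> B2) \<and>
     (\<forall>f\<in>B2. (\<forall>x. (\<lambda>y. f x y) \<in> B1) \<and> (\<lambda>x. \<mu> (\<lambda>y. f x y)) \<in> B1 \<and>
        (\<lambda>x. f x x) \<in> B1)"

text \<open>f(x,.) = mu(y |-> f(x,y)) and f(.,.) = mu(x |-> f(x,.)).\<close>
definition partial_mean :: "(('a \<Rightarrow> real) \<Rightarrow> real) \<Rightarrow> ('a \<Rightarrow> 'a \<Rightarrow> real) \<Rightarrow> 'a \<Rightarrow> real" where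
  "partial_mean \<mu> f x = \<mu> (\<lambda>y. f x y)"

definition double_mean :: "(('a \<Rightarrow> real) \<Rightarrow> real) \<Rightarrow> ('a \<Rightarrow> 'a \<Rightarrow> real) \<Rightarrow> real" where
  "double_mean \<mu> f = \<mu> (\<lambda>x. partial_mean \<mu> f x)"

end

theory Submission
  imports Defs
begin

text \<open>The triangle inequality through the point x gives d(y,z) \<le> d(x,y) + d(x,z). Averaging
  over z yields d(y,\<cdot>) \<le> d(x,y) + d(x,\<cdot>), and averaging this over y yields
  d(\<cdot>,\<cdot>) \<le> 2 d(x,\<cdot>).\<close>

lemma metric_on_triangle:
  assumes "metric_on d"
  shows "d y z \<le> d x y + d x z"
  using assms unfolding metric_on_def by (metis diff_ge_0_iff_ge)

lemma mean_le_add_const: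
  assumes "B1_space B1" and "mean_functional B1 \<mu>"
    and "f \<in> B1" and "g \<in> B1" and "\<And>y. f y \<le> g y + c"
  shows "\<mu> f \<le> \<mu> g + c"
proof -
  have const: "(\<lambda>_. c) \<in> B1"
    and add: "\<And>f h. f \<in> B1 \<Longrightarrow> h \<in> B1 \<Longrightarrow> (\<lambda>y. f y + h y) \<in> B1"
    using assms(1) unfolding B1_space_def by blast+
  have shifted: "(\<lambda>y. g y + c) \<in> B1"
    using add[OF assms(4) const] .
  have mono: "\<And>f g. f \<in> B1 \<Longrightarrow> g \<in> B1 \<Longrightarrow> (\<forall>y. g y \<ge> f y) \<Longrightarrow> \<mu> g \<ge> \<mu> f"
    and additive: "\<And>f g. f \<in> B1 \<Longrightarrow> g \<in> B1 \<Longrightarrow> \<mu> (\<lambda>y. f y + g y) = \<mu> f + \<mu> g"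
    and normalized: "\<mu> (\<lambda>_. c) = c"
    using assms(2) unfolding mean_functional_def by blast+
  have "\<mu> f \<le> \<mu> (\<lambda>y. g y + c)"
    using mono[OF assms(3) shifted] assms(5) by blast
  also have "\<dots> = \<mu> g + c"
    using additive[OF assms(4) const] normalized by simp
  finally show ?thesis .
qed

lemma B2_space_row_in_B1:
  assumes "B2_space B1 \<mu> B2" and "f \<in> B2"
  shows "(\<lambda>y. f x y) \<in> B1"
  using assms unfolding B2_space_def by blast

lemma B2_space_partial_mean_in_B1:
  assumes "B2_space B1 \<mu> B2" and "f \<in> B2"
  shows "partial_mean \<mu> f \<in> B1"
  using assms unfolding B2_space_def partial_mean_def by blast

lemma partial_mean_metric_triangle:
  assumes "B1_space B1" and "mean_functional B1 \<mu>" and "B2_space B1 \<mu> B2"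
    and "metric_on d" and "d \<in> B2"
  shows "partial_mean \<mu> d y \<le> partial_mean \<mu> d x + d x y"
proof -
  have "d y z \<le> d x z + d x y" for z
    using metric_on_triangle[OF assms(4), of y z x] by linarith
  then show ?thesis
    unfolding partial_mean_def
    using mean_le_add_const[OF assms(1,2) B2_space_row_in_B1[OF assms(3,5)]
        B2_space_row_in_B1[OF assms(3,5)]] by blast
qed

theorem corollary1:
  fixes B1 :: "('a \<Rightarrow> real) set" and \<mu> :: "('a \<Rightarrow> real) \<Rightarrow> real"
    and B2 :: "('a \<Rightarrow> 'a \<Rightarrow> real) set" and d :: "'a \<Rightarrow> 'a \<Rightarrow> real" and x :: 'a
  assumes "B1_space B1" and "mean_functional B1 \<mu>" and "B2_space B1 \<mu> B2"
    and "metric_on d" and "d \<in> B2"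
  shows "partial_mean \<mu> d x \<ge> double_mean \<mu> d / 2"
proof -
  have "double_mean \<mu> d \<le> \<mu> (\<lambda>y. d x y) + partial_mean \<mu> d x"
    unfolding double_mean_def
  proof (rule mean_le_add_const[OF assms(1,2)])
    show "partial_mean \<mu> d y \<le> d x y + partial_mean \<mu> d x" for y
      using partial_mean_metric_triangle[OF assms, where x = x and y = y] by linarith
  qed (use B2_space_partial_mean_in_B1[OF assms(3,5)] B2_space_row_in_B1[OF assms(3,5)] in auto)
  then show ?thesis
    unfolding partial_mean_def by simp
qed

end
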